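(* Let $Y\in\mathbb{R}^n$ satisfy $Y=X\beta+\sigma\xi$ with a deterministic matrix $X\in\mathbb{R}^{n\times p}$ with columns $X_1,\dots,X_p$, $\sigma>0$ and $\xi\sim\mathcal{N}(0,\mathbb{I}_n)$. For any $a>0$, $q\ge1$ and $s<p$, $$\inf_{\hat\beta}\sup_{\beta\in\Omega^p_{s,a}}\mathbf{E}_\beta\big(\|\hat\beta-\beta\|_q^q\big)\ \ge\ \sigma_q^q\max_{S\subseteq\{1,\dots,p\},\,|S|=s}\sum_{i\in S}\frac{1}{\|X_i\|_2^q},$$ where the infimum is over all estimators $\hat\beta$ (measurable functions of $(X,Y)$).
   Context: $\Omega^p_{s,a}=\{\beta\in\mathbb{R}^p:\ |\beta|_0\le s\ \text{and}\ |\beta_i|\ge a\ \forall i\in S_\beta\}$, where $|\beta|_0$ is the number of nonzero entries and $S_\beta$ the set of indices of nonzero entries. $\mathbf{E}_\beta$ is expectation under the model with parameter $\beta$. $\sigma_q:=(\mathbf{E}|\zeta|^q)^{1/q}$ for $\zeta\sim\mathcal{N}(0,\sigma^2)$. $\|\cdot\|_q$ is the $\ell_q$ norm. *)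

theory Defs
  imports "HOL-Probability.Probability"
begin

definition Omega :: "nat \<Rightarrow> real \<Rightarrow> ('p::finite \<Rightarrow> real) set" where
  "Omega s a = {\<beta>. card {i. \<beta> i \<noteq> 0} \<le> s \<and> (\<forall>i. \<beta> i \<noteq> 0 \<longrightarrow> \<bar>\<beta> i\<bar> \<ge> a)}"

definition sigma_q :: "real \<Rightarrow> real \<Rightarrow> real" where
  "sigma_q \<sigma> q = (\<integral>x. normal_density 0 \<sigma> x * \<bar>x\<bar> powr q \<partial>lborel) powr (1 / q)"

definition std_gauss :: "('n::finite \<Rightarrow> real) measure" where
  "std_gauss = PiM UNIV (\<lambda>_. density lborel std_normal_density)"

text \<open>Observation Y = X beta + sigma xi, X an n x p matrix (X j i = entry in row j, column i).\<close>
definition obs :: "('n \<Rightarrow> 'p::finite \<Rightarrow> real) \<Rightarrow> real \<Rightarrow> ('p \<Rightarrow> real) \<Rightarrow> ('n \<Rightarrow> real) \<Rightarrow> ('n \<Rightarrow> real)" where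
  "obs X \<sigma> \<beta> \<xi> = (\<lambda>j. (\<Sum>i\<in>UNIV. X j i * \<beta> i) + \<sigma> * \<xi> j)"

definition col_norm :: "('n::finite \<Rightarrow> 'p \<Rightarrow> real) \<Rightarrow> 'p \<Rightarrow> real" where
  "col_norm X i = sqrt (\<Sum>j\<in>UNIV. (X j i)\<^sup>2)"

end

theory Submission
  imports Defs
begin

text \<open>
  Fix a support \<open>S\<close> with \<open>|S| = s\<close> and let the coordinates \<open>\<beta>\<^sub>i\<close>, \<open>i \<in> S\<close>, be independent and
  uniform on \<open>[a, a + L]\<close>, all others zero. This prior lives on \<open>Omega s a\<close>, so its Bayes risk is a
  lower bound for the maximal risk, and the Bayes risk splits into a sum over the coordinates.
  Given the other coordinates, estimating \<open>\<beta>\<^sub>i\<close> is a one-dimensional location problem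
  \<open>Y = m + \<theta> X\<^sub>i + \<sigma> \<xi>\<close>. Completing the square shows that the likelihood is proportional to a
  normal density in \<open>\<theta>\<close> of width \<open>\<tau> = \<sigma> / \<parallel>X\<^sub>i\<parallel>\<close> around the least-squares estimate, and
  convexity of \<open>|\<cdot>|\<^sup>q\<close> (\<open>2|u|\<^sup>q \<le> |c - u|\<^sup>q + |c + u|\<^sup>q\<close>) shows that no point estimate beats the
  centre of a symmetric posterior. Hence every estimator has integrated risk over \<open>[a, a + L]\<close> at
  least \<open>\<integral> \<phi>\<^sub>\<tau>(u) |u|\<^sup>q (L - 2|u|)\<^sub>+ du\<close>; dividing by \<open>L\<close> and letting \<open>L \<rightarrow> \<infinity>\<close> gives
  \<open>E|N(0, \<tau>\<^sup>2)|\<^sup>q = \<sigma>\<^sub>q\<^sup>q / \<parallel>X\<^sub>i\<parallel>\<^sup>q\<close>. If \<open>X\<^sub>i = 0\<close>, the data carry no information on \<open>\<beta>\<^sub>i\<close>,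
  the integrated risk is of order \<open>L\<^sup>2\<close>, and both sides are infinite.
\<close>

section \<open>Products of Gaussian measures\<close>

lemma indicator_PiE_UNIV_eq_prod:
  "(indicator (PiE UNIV A) y :: ennreal) = (\<Prod>j\<in>(UNIV::'n::finite set). indicator (A j) (y j))"
proof (cases "y \<in> PiE UNIV A")
  case True
  then show ?thesis by (auto simp: PiE_iff indicator_def)
next
  case False
  then obtain j where "y j \<notin> A j" by (auto simp: PiE_iff)
  then show ?thesis
    using False by (subst prod_zero) (auto simp: indicator_def intro!: bexI[of _ j])
qed

lemma PiM_density_lborel:
  fixes g :: "'n::finite \<Rightarrow> real \<Rightarrow> ennreal"
  assumes [measurable]: "\<And>j. g j \<in> borel_measurable borel"
    and prob: "\<And>j. prob_space (density lborel (g j))"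
  shows "PiM UNIV (\<lambda>j. density lborel (g j))
       = density (PiM UNIV (\<lambda>_. lborel)) (\<lambda>y. \<Prod>j\<in>UNIV. g j (y j))"
proof -
  interpret D: product_prob_space "\<lambda>j. density lborel (g j)"
    using prob by (intro product_prob_spaceI) auto
  interpret L: product_sigma_finite "\<lambda>_::'n. lborel :: real measure"
    by (intro product_sigma_finite.intro) (simp add: lborel.sigma_finite_measure_axioms)
  show ?thesis
  proof (rule D.PiM_eqI[symmetric])
    show "sets (density (PiM UNIV (\<lambda>_. lborel)) (\<lambda>y. \<Prod>j\<in>UNIV. g j (y j)))
        = sets (PiM UNIV (\<lambda>j. density lborel (g j)))"
      by (simp only: sets_density) (intro sets_PiM_cong; simp)
    fix A assume "\<And>i. i \<in> UNIV \<Longrightarrow> A i \<in> sets (density lborel (g i))"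
    then have [measurable]: "\<And>i. A i \<in> sets borel" by simp
    have "emeasure (density (PiM UNIV (\<lambda>_. lborel)) (\<lambda>y. \<Prod>j\<in>UNIV. g j (y j))) (PiE UNIV A)
        = \<integral>\<^sup>+ y. (\<Prod>j\<in>UNIV. g j (y j) * indicator (A j) (y j)) \<partial>PiM UNIV (\<lambda>_. lborel)"
      by (subst emeasure_density)
        (auto simp: prod.distrib indicator_PiE_UNIV_eq_prod intro!: sets_PiM_I_finite nn_integral_cong)
    also have "\<dots> = (\<Prod>j\<in>UNIV. \<integral>\<^sup>+ x. g j x * indicator (A j) x \<partial>lborel)"
      by (rule L.product_nn_integral_prod) auto
    also have "\<dots> = (\<Prod>j\<in>UNIV. emeasure (density lborel (g j)) (A j))"
      by (simp add: emeasure_density)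
    finally show "emeasure (density (PiM UNIV (\<lambda>_. lborel)) (\<lambda>y. \<Prod>j\<in>UNIV. g j (y j))) (PiE UNIV A)
        = (\<Prod>j\<in>UNIV. emeasure (density lborel (g j)) (A j))" .
  qed simp
qed

lemma distr_PiM_componentwise:
  fixes M :: "'n::finite \<Rightarrow> 'a measure" and N :: "'n \<Rightarrow> 'b measure"
  assumes prob: "\<And>j. prob_space (M j)"
    and f[measurable]: "\<And>j. f j \<in> M j \<rightarrow>\<^sub>M N j"
  shows "distr (PiM UNIV M) (PiM UNIV N) (\<lambda>x j. f j (x j)) = PiM UNIV (\<lambda>j. distr (M j) (N j) (f j))"
proof -
  interpret M: product_prob_space M using prob by (intro product_prob_spaceI) auto
  interpret D: product_prob_space "\<lambda>j. distr (M j) (N j) (f j)"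
    using prob by (intro product_prob_spaceI) (auto intro: prob_space.prob_space_distr)
  have meas: "(\<lambda>x j. f j (x j)) \<in> PiM UNIV M \<rightarrow>\<^sub>M PiM UNIV N"
  proof (rule measurable_PiM_single')
    show "(\<lambda>x. f j (x j)) \<in> PiM UNIV M \<rightarrow>\<^sub>M N j" for j
      by (rule measurable_compose[OF measurable_component_singleton[of j UNIV M] f]) simp
  qed (auto simp: space_PiM PiE_iff intro!: measurable_space[OF f])
  show ?thesis
  proof (rule D.PiM_eqI)
    show "sets (distr (PiM UNIV M) (PiM UNIV N) (\<lambda>x j. f j (x j)))
        = sets (PiM UNIV (\<lambda>j. distr (M j) (N j) (f j)))"
      by (simp only: sets_distr) (intro sets_PiM_cong; simp)
    fix A assume "\<And>i. i \<in> UNIV \<Longrightarrow> A i \<in> sets (distr (M i) (N i) (f i))"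
    then have A: "\<And>i. A i \<in> sets (N i)" by simp
    have "emeasure (distr (PiM UNIV M) (PiM UNIV N) (\<lambda>x j. f j (x j))) (PiE UNIV A)
       = emeasure (PiM UNIV M) ((\<lambda>x j. f j (x j)) -` PiE UNIV A \<inter> space (PiM UNIV M))"
      by (rule emeasure_distr[OF meas]) (auto intro!: sets_PiM_I_finite A)
    also have "(\<lambda>x j. f j (x j)) -` PiE UNIV A \<inter> space (PiM UNIV M)
             = PiE UNIV (\<lambda>j. f j -` A j \<inter> space (M j))"
      by (auto simp: space_PiM PiE_def Pi_def extensional_def)
    also have "emeasure (PiM UNIV M) (PiE UNIV (\<lambda>j. f j -` A j \<inter> space (M j)))
             = (\<Prod>j\<in>UNIV. emeasure (distr (M j) (N j) (f j)) (A j))"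
      using A by (subst M.emeasure_PiM) (auto intro!: prod.cong emeasure_distr[symmetric])
    finally show "emeasure (distr (PiM UNIV M) (PiM UNIV N) (\<lambda>x j. f j (x j))) (PiE UNIV A)
        = (\<Prod>j\<in>UNIV. emeasure (distr (M j) (N j) (f j)) (A j))" .
  qed simp
qed

lemma distr_std_normal_affine:
  fixes \<sigma> t :: real
  assumes "\<sigma> > 0"
  shows "distr (density lborel std_normal_density) borel (\<lambda>x. t + \<sigma> * x)
       = density lborel (normal_density t \<sigma>)"
proof (rule measure_eqI)
  fix A assume "A \<in> sets (distr (density lborel std_normal_density) borel (\<lambda>x. t + \<sigma> * x))"
  then have [measurable]: "A \<in> sets borel" by simp
  have density_rescaled: "ennreal (std_normal_density x)
      = ennreal \<sigma> * ennreal (normal_density t \<sigma> (t + \<sigma> * x))" for x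
    using assms
    by (simp add: normal_density_def ennreal_mult'[symmetric] real_sqrt_mult power_mult_distrib field_simps)
  have [measurable]: "(\<lambda>x. t + \<sigma> * x) -` A \<in> sets borel"
    using measurable_sets_borel[of "\<lambda>x. t + \<sigma> * x" borel A] by simp
  have "emeasure (distr (density lborel std_normal_density) borel (\<lambda>x. t + \<sigma> * x)) A
      = \<integral>\<^sup>+x. ennreal (std_normal_density x) * indicator A (t + \<sigma> * x) \<partial>lborel"
    by (subst emeasure_distr) (auto simp: emeasure_density intro!: nn_integral_cong split: split_indicator)
  also have "\<dots> = \<integral>\<^sup>+x. ennreal \<sigma> * (ennreal (normal_density t \<sigma> (t + \<sigma> * x)) * indicator A (t + \<sigma> * x)) \<partial>lborel"
    by (simp add: density_rescaled mult.assoc)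
  also have "\<dots> = \<integral>\<^sup>+x. ennreal (normal_density t \<sigma> x) * indicator A x \<partial>lborel"
    using assms by (subst nn_integral_cmult) (measurable, subst nn_integral_real_affine[where c=\<sigma> and t=t], auto)
  finally show "emeasure (distr (density lborel std_normal_density) borel (\<lambda>x. t + \<sigma> * x)) A
      = emeasure (density lborel (normal_density t \<sigma>)) A"
    by (simp add: emeasure_density)
qed simp

lemma measurable_PiM_UNIV_real [measurable (raw)]:
  assumes "\<And>j. (\<lambda>x. F j x) \<in> M \<rightarrow>\<^sub>M borel"
  shows "(\<lambda>x (j::'n::finite). F j x :: real) \<in> M \<rightarrow>\<^sub>M PiM UNIV (\<lambda>_. borel)"
  by (rule measurable_PiM_single') (use assms in auto)

lemma sets_PiM_UNIV_lborel: "sets (PiM UNIV (\<lambda>_::'n. lborel)) = sets (PiM UNIV (\<lambda>_::'n. borel :: real measure))"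
  by (intro sets_PiM_cong) auto

lemma sets_std_gauss [measurable_cong]: "sets std_gauss = sets (PiM UNIV (\<lambda>_. borel))"
  unfolding std_gauss_def by (intro sets_PiM_cong) auto

lemma prob_space_std_gauss: "prob_space std_gauss"
  unfolding std_gauss_def by (intro prob_space_PiM) (auto intro: prob_space_normal_density)

lemma nn_integral_std_gauss_affine:
  fixes g :: "('n::finite \<Rightarrow> real) \<Rightarrow> ennreal" and t :: "'n \<Rightarrow> real"
  assumes "\<sigma> > 0" and [measurable]: "g \<in> borel_measurable (PiM UNIV (\<lambda>_. borel))"
  shows "(\<integral>\<^sup>+\<xi>. g (\<lambda>j. t j + \<sigma> * \<xi> j) \<partial>std_gauss)
       = \<integral>\<^sup>+y. ennreal (\<Prod>j\<in>UNIV. normal_density (t j) \<sigma> (y j)) * g y \<partial>PiM UNIV (\<lambda>_. lborel)"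
proof -
  have "distr std_gauss (PiM UNIV (\<lambda>_. borel)) (\<lambda>x j. t j + \<sigma> * x j)
      = PiM UNIV (\<lambda>j. distr (density lborel std_normal_density) borel (\<lambda>x. t j + \<sigma> * x))"
    unfolding std_gauss_def
    by (rule distr_PiM_componentwise[where f="\<lambda>j x. t j + \<sigma> * x"])
      (auto intro: prob_space_normal_density)
  also have "\<dots> = PiM UNIV (\<lambda>j. density lborel (normal_density (t j) \<sigma>))"
    using assms by (simp add: distr_std_normal_affine)
  also have "\<dots> = density (PiM UNIV (\<lambda>_. lborel)) (\<lambda>y. \<Prod>j\<in>UNIV. ennreal (normal_density (t j) \<sigma> (y j)))"
    using assms by (intro PiM_density_lborel) (auto intro: prob_space_normal_density)
  finally have law: "distr std_gauss (PiM UNIV (\<lambda>_. borel)) (\<lambda>x j. t j + \<sigma> * x j)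
      = density (PiM UNIV (\<lambda>_. lborel)) (\<lambda>y. \<Prod>j\<in>UNIV. ennreal (normal_density (t j) \<sigma> (y j)))" .
  have "(\<integral>\<^sup>+\<xi>. g (\<lambda>j. t j + \<sigma> * \<xi> j) \<partial>std_gauss)
      = \<integral>\<^sup>+y. g y \<partial>distr std_gauss (PiM UNIV (\<lambda>_. borel)) (\<lambda>x j. t j + \<sigma> * x j)"
    by (subst nn_integral_distr) auto
  also have "\<dots> = \<integral>\<^sup>+y. (\<Prod>j\<in>UNIV. ennreal (normal_density (t j) \<sigma> (y j))) * g y \<partial>PiM UNIV (\<lambda>_. lborel)"
    unfolding law
    by (subst nn_integral_density) (auto simp: measurable_cong_sets[OF sets_PiM_UNIV_lborel refl])
  finally show ?thesis by (simp add: prod_ennreal)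
qed

section \<open>A symmetrisation inequality\<close>

lemma powr_midpoint_le:
  fixes a b q :: real
  assumes "a \<ge> 0" "b \<ge> 0" "q \<ge> 1"
  shows "((a + b) / 2) powr q \<le> (a powr q + b powr q) / 2"
proof (cases "a = 0 \<or> b = 0")
  case True
  have "(x / 2) powr q \<le> x powr q / 2" if "x \<ge> 0" for x :: real
  proof -
    have "2 \<le> 2 powr q" using powr_mono[of 1 q 2] assms by simp
    then have "x powr q / 2 powr q \<le> x powr q / 2" by (intro divide_left_mono) auto
    then show ?thesis using that by (simp add: powr_divide)
  qed
  with True assms show ?thesis by auto
next
  case False
  with assms have "((1 - 1/2) *\<^sub>R a + (1/2) *\<^sub>R b) powr q \<le> (1 - 1/2) * a powr q + (1/2) * b powr q"
    by (intro convex_onD[OF powr_convex]) auto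
  then show ?thesis by (simp add: field_simps)
qed

lemma abs_powr_le_shifted_sum:
  fixes c u q :: real
  assumes "q \<ge> 1"
  shows "2 * \<bar>u\<bar> powr q \<le> \<bar>c - u\<bar> powr q + \<bar>c + u\<bar> powr q"
proof -
  have "\<bar>u\<bar> \<le> (\<bar>c - u\<bar> + \<bar>c + u\<bar>) / 2"
    using abs_triangle_ineq4[of "c + u" "c - u"] by simp
  then have "\<bar>u\<bar> powr q \<le> ((\<bar>c - u\<bar> + \<bar>c + u\<bar>) / 2) powr q"
    using assms by (intro powr_mono2) auto
  also have "\<dots> \<le> (\<bar>c - u\<bar> powr q + \<bar>c + u\<bar> powr q) / 2"
    using assms by (intro powr_midpoint_le) auto
  finally show ?thesis by simp
qed

lemma nn_integral_abs_powr_le_reflections: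
  fixes W :: "real \<Rightarrow> real"
  assumes [measurable_cong]: "sets M = sets borel" and [measurable]: "W \<in> borel_measurable borel"
    and W_nonneg: "\<And>u. W u \<ge> 0" and q: "q \<ge> 1"
  shows "2 * (\<integral>\<^sup>+u. ennreal (W u * \<bar>u\<bar> powr q) \<partial>M)
       \<le> (\<integral>\<^sup>+u. ennreal (W u * \<bar>c - u\<bar> powr q) \<partial>M) + (\<integral>\<^sup>+u. ennreal (W u * \<bar>c + u\<bar> powr q) \<partial>M)"
proof -
  have "2 * (\<integral>\<^sup>+u. ennreal (W u * \<bar>u\<bar> powr q) \<partial>M) = \<integral>\<^sup>+u. ennreal (W u * (2 * \<bar>u\<bar> powr q)) \<partial>M"
    using W_nonneg by (subst nn_integral_cmult[symmetric]) (auto simp: ennreal_mult' mult_ac)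
  also have "\<dots> \<le> \<integral>\<^sup>+u. ennreal (W u * \<bar>c - u\<bar> powr q) + ennreal (W u * \<bar>c + u\<bar> powr q) \<partial>M"
    using W_nonneg abs_powr_le_shifted_sum[OF q, of _ c]
    by (intro nn_integral_mono)
      (auto simp: ennreal_plus[symmetric] distrib_left[symmetric] intro!: mult_left_mono simp del: ennreal_plus)
  also have "\<dots> = (\<integral>\<^sup>+u. ennreal (W u * \<bar>c - u\<bar> powr q) \<partial>M) + (\<integral>\<^sup>+u. ennreal (W u * \<bar>c + u\<bar> powr q) \<partial>M)"
    by (rule nn_integral_add) auto
  finally show ?thesis .
qed

text \<open>An even weight \<open>w\<close> centred at \<open>t\<close> cannot be beaten by any point estimate \<open>c\<close> on
  the part of \<open>J\<close> that is symmetric about \<open>t\<close>: substituting \<open>\<theta> = t + u\<close> and \<open>\<theta> = t - u\<close>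
  and averaging the two losses gives at least \<open>\<bar>u\<bar>\<^sup>q\<close>.\<close>
lemma nn_integral_symmetric_window_le:
  fixes w :: "real \<Rightarrow> real" and J :: "real set" and c t q :: real
  assumes [measurable]: "w \<in> borel_measurable borel" "J \<in> sets borel"
    and w_nonneg: "\<And>u. w u \<ge> 0" and w_even: "\<And>u. w (- u) = w u" and q: "q \<ge> 1"
  shows "(\<integral>\<^sup>+u. ennreal (indicator J (t + u) * indicator J (t - u) * w u * \<bar>u\<bar> powr q) \<partial>lborel)
       \<le> (\<integral>\<^sup>+\<theta>. ennreal (indicator J \<theta> * w (\<theta> - t) * \<bar>c - \<theta>\<bar> powr q) \<partial>lborel)"
    (is "?lhs \<le> ?rhs")
proof -
  define W where "W u = indicator J (t + u) * indicator J (t - u) * w u" for u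
  have W_nonneg: "W u \<ge> 0" for u using w_nonneg by (simp add: W_def)
  have [measurable]: "W \<in> borel_measurable borel" unfolding W_def by measurable
  have "(\<integral>\<^sup>+u. ennreal (W u * \<bar>c - t - u\<bar> powr q) \<partial>lborel)
      \<le> \<integral>\<^sup>+u. ennreal (indicator J (t + 1 * u) * w (t + 1 * u - t) * \<bar>c - (t + 1 * u)\<bar> powr q) \<partial>lborel"
    using w_nonneg by (intro nn_integral_mono ennreal_leI) (auto simp: W_def indicator_def algebra_simps)
  also have "\<dots> = ?rhs"
    by (subst nn_integral_real_affine[where c=1 and t=t]) auto
  finally have plus: "(\<integral>\<^sup>+u. ennreal (W u * \<bar>c - t - u\<bar> powr q) \<partial>lborel) \<le> ?rhs" .
  have "(\<integral>\<^sup>+u. ennreal (W u * \<bar>c - t + u\<bar> powr q) \<partial>lborel)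
      \<le> \<integral>\<^sup>+u. ennreal (indicator J (t + (-1) * u) * w (t + (-1) * u - t) * \<bar>c - (t + (-1) * u)\<bar> powr q) \<partial>lborel"
    using w_nonneg w_even
    by (intro nn_integral_mono ennreal_leI) (auto simp: W_def indicator_def algebra_simps)
  also have "\<dots> = ?rhs"
    by (subst nn_integral_real_affine[where c="-1" and t=t]) auto
  finally have minus: "(\<integral>\<^sup>+u. ennreal (W u * \<bar>c - t + u\<bar> powr q) \<partial>lborel) \<le> ?rhs" .
  have "2 * ?lhs \<le> ?rhs + ?rhs"
    using nn_integral_abs_powr_le_reflections[of lborel W q "c - t"] W_nonneg q plus minus
    by (auto simp: W_def mult.assoc intro: order_trans add_mono)
  then show ?thesis
    by (simp add: mult_2[symmetric] ennreal_mult_le_mult_iff)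
qed

section \<open>A one-dimensional Gaussian location problem\<close>

text \<open>Completing the square in \<open>\<theta>\<close>; the centre is the least-squares estimate of \<open>\<theta>\<close>
  from \<open>y = \<theta> v + \<sigma> \<xi>\<close>.\<close>
lemma prod_normal_density_proportional:
  fixes y v :: "'n::finite \<Rightarrow> real"
  assumes \<sigma>: "\<sigma> > 0" and S: "(\<Sum>j\<in>UNIV. (v j)\<^sup>2) > 0"
  obtains C where "C \<ge> 0" and "\<And>\<theta>. (\<Prod>j\<in>UNIV. normal_density (\<theta> * v j) \<sigma> (y j))
      = C * normal_density ((\<Sum>j\<in>UNIV. v j * y j) / (\<Sum>j\<in>UNIV. (v j)\<^sup>2)) (\<sigma> / sqrt (\<Sum>j\<in>UNIV. (v j)\<^sup>2)) \<theta>"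
proof -
  define Syy where "Syy = (\<Sum>j\<in>UNIV. (y j)\<^sup>2)"
  define Svy where "Svy = (\<Sum>j\<in>UNIV. v j * y j)"
  define S where "S = (\<Sum>j\<in>UNIV. (v j)\<^sup>2)"
  define K where "K = 1 / sqrt (2 * pi * \<sigma>\<^sup>2)"
  have "S > 0" using S by (simp add: S_def)
  have "(\<Prod>j\<in>UNIV. normal_density (\<theta> * v j) \<sigma> (y j))
      = (K ^ CARD('n) * sqrt (2 * pi * (\<sigma> / sqrt S)\<^sup>2) * exp (- (Syy - Svy\<^sup>2 / S) / (2 * \<sigma>\<^sup>2)))
        * normal_density (Svy / S) (\<sigma> / sqrt S) \<theta>" for \<theta>
  proof -
    have "(\<Sum>j\<in>UNIV. (y j - \<theta> * v j)\<^sup>2) = Syy - 2 * \<theta> * Svy + \<theta>\<^sup>2 * S"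
      by (simp add: Syy_def Svy_def S_def power2_eq_square algebra_simps sum.distrib
          sum_subtractf sum_distrib_left)
    then have exponent: "(\<Sum>j\<in>UNIV. - (y j - \<theta> * v j)\<^sup>2 / (2 * \<sigma>\<^sup>2))
        = - (Syy - Svy\<^sup>2 / S) / (2 * \<sigma>\<^sup>2) + (- (\<theta> - Svy / S)\<^sup>2 / (2 * (\<sigma> / sqrt S)\<^sup>2))"
      using \<open>S > 0\<close> \<sigma>
      by (simp add: sum_divide_distrib[symmetric] sum_negf) (simp add: power_divide field_simps power2_eq_square)
    have "(\<Prod>j\<in>UNIV. normal_density (\<theta> * v j) \<sigma> (y j))
        = (\<Prod>j\<in>UNIV. K * exp (- (y j - \<theta> * v j)\<^sup>2 / (2 * \<sigma>\<^sup>2)))"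
      by (simp add: normal_density_def K_def)
    also have "\<dots> = K ^ CARD('n) * exp (\<Sum>j\<in>UNIV. - (y j - \<theta> * v j)\<^sup>2 / (2 * \<sigma>\<^sup>2))"
      by (simp add: prod.distrib exp_sum)
    finally show ?thesis
      unfolding exponent using \<open>S > 0\<close> \<sigma>
      by (simp add: normal_density_def exp_add[symmetric] exp_diff)
  qed
  then show ?thesis
    by (intro that[of "K ^ CARD('n) * sqrt (2 * pi * (\<sigma> / sqrt S)\<^sup>2) * exp (- (Syy - Svy\<^sup>2 / S) / (2 * \<sigma>\<^sup>2))"])
      (auto simp: K_def S_def Svy_def)
qed

definition symmetric_window_risk :: "real set \<Rightarrow> real \<Rightarrow> real \<Rightarrow> real \<Rightarrow> ennreal" where
  "symmetric_window_risk J \<tau> q t =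
    (\<integral>\<^sup>+u. ennreal (indicator J (t + u) * indicator J (t - u) * normal_density 0 \<tau> u * \<bar>u\<bar> powr q) \<partial>lborel)"

lemma measurable_symmetric_window_risk [measurable]:
  assumes [measurable]: "J \<in> sets borel"
  shows "symmetric_window_risk J \<tau> q \<in> borel_measurable borel"
  unfolding symmetric_window_risk_def normal_density_def by measurable

lemma symmetric_window_risk_le:
  assumes "J \<in> sets borel" and "q \<ge> 1"
  shows "symmetric_window_risk J \<tau> q t
       \<le> (\<integral>\<^sup>+\<theta>. ennreal (normal_density t \<tau> \<theta>) * ennreal (\<bar>c - \<theta>\<bar> powr q) * indicator J \<theta> \<partial>lborel)"
proof -
  have "symmetric_window_risk J \<tau> q t
      \<le> (\<integral>\<^sup>+\<theta>. ennreal (indicator J \<theta> * normal_density 0 \<tau> (\<theta> - t) * \<bar>c - \<theta>\<bar> powr q) \<partial>lborel)"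
    unfolding symmetric_window_risk_def using assms
    by (intro nn_integral_symmetric_window_le) (auto simp: normal_density_def)
  also have "\<dots> = (\<integral>\<^sup>+\<theta>. ennreal (normal_density t \<tau> \<theta>) * ennreal (\<bar>c - \<theta>\<bar> powr q) * indicator J \<theta> \<partial>lborel)"
    by (intro nn_integral_cong) (auto simp: normal_density_def ennreal_mult'[symmetric] split: split_indicator)
  finally show ?thesis .
qed

lemma nn_integral_symmetric_window_risk:
  "(\<integral>\<^sup>+t. symmetric_window_risk {c..c+L} \<tau> q t \<partial>lborel)
     = (\<integral>\<^sup>+u. ennreal (normal_density 0 \<tau> u * \<bar>u\<bar> powr q * max 0 (L - 2 * \<bar>u\<bar>)) \<partial>lborel)"
proof -
  have "(\<integral>\<^sup>+t. ennreal (indicator {c..c+L} (t + u) * indicator {c..c+L} (t - u) * normal_density 0 \<tau> u * \<bar>u\<bar> powr q) \<partial>lborel)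
      = ennreal (normal_density 0 \<tau> u * \<bar>u\<bar> powr q * max 0 (L - 2 * \<bar>u\<bar>))" for u
  proof -
    have "(\<integral>\<^sup>+t. ennreal (indicator {c..c+L} (t + u) * indicator {c..c+L} (t - u) * normal_density 0 \<tau> u * \<bar>u\<bar> powr q) \<partial>lborel)
        = (\<integral>\<^sup>+t. ennreal (normal_density 0 \<tau> u * \<bar>u\<bar> powr q) * indicator {c + \<bar>u\<bar>..c + L - \<bar>u\<bar>} t \<partial>lborel)"
      by (intro nn_integral_cong) (auto simp: indicator_def abs_if)
    also have "\<dots> = ennreal (normal_density 0 \<tau> u * \<bar>u\<bar> powr q) * ennreal (max 0 (L - 2 * \<bar>u\<bar>))"
      by (cases "c + \<bar>u\<bar> \<le> c + L - \<bar>u\<bar>") (auto simp: nn_integral_cmult_indicator max_def)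
    finally show ?thesis by (simp add: ennreal_mult)
  qed
  moreover have "(\<integral>\<^sup>+t. symmetric_window_risk {c..c+L} \<tau> q t \<partial>lborel)
      = (\<integral>\<^sup>+u. (\<integral>\<^sup>+t. ennreal (indicator {c..c+L} (t + u) * indicator {c..c+L} (t - u) * normal_density 0 \<tau> u * \<bar>u\<bar> powr q) \<partial>lborel) \<partial>lborel)"
    unfolding symmetric_window_risk_def
    by (rule lborel_pair.Fubini') (unfold normal_density_def, measurable)
  ultimately show ?thesis by simp
qed

lemma nn_integral_lborel_random_shift:
  fixes h :: "real \<Rightarrow> ennreal" and W :: "'a \<Rightarrow> real"
  assumes "prob_space M" and [measurable]: "h \<in> borel_measurable borel" "W \<in> borel_measurable M"
  shows "(\<integral>\<^sup>+\<theta>. (\<integral>\<^sup>+\<xi>. h (\<theta> + W \<xi>) \<partial>M) \<partial>lborel) = (\<integral>\<^sup>+t. h t \<partial>lborel)"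
proof -
  interpret M: prob_space M by fact
  interpret pair_sigma_finite lborel M
    by (intro pair_sigma_finite.intro lborel.sigma_finite_measure_axioms M.sigma_finite_measure_axioms)
  have "(\<integral>\<^sup>+\<theta>. (\<integral>\<^sup>+\<xi>. h (\<theta> + W \<xi>) \<partial>M) \<partial>lborel) = (\<integral>\<^sup>+\<xi>. (\<integral>\<^sup>+\<theta>. h (\<theta> + W \<xi>) \<partial>lborel) \<partial>M)"
    by (rule Fubini'[symmetric]) measurable
  also have "\<dots> = (\<integral>\<^sup>+\<xi>. (\<integral>\<^sup>+t. h t \<partial>lborel) \<partial>M)"
  proof -
    have "(\<integral>\<^sup>+\<theta>. h (\<theta> + W \<xi>) \<partial>lborel) = (\<integral>\<^sup>+t. h t \<partial>lborel)" for \<xi>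
      using nn_integral_real_affine[of h 1 "W \<xi>"] by (simp add: add.commute)
    then show ?thesis by simp
  qed
  finally show ?thesis by (simp add: M.emeasure_space_1)
qed

lemma likelihood_window_risk_ge:
  fixes y v :: "'n::finite \<Rightarrow> real"
  assumes \<sigma>: "\<sigma> > 0" and v: "(\<Sum>j\<in>UNIV. (v j)\<^sup>2) > 0" and [measurable]: "J \<in> sets borel" and q: "q \<ge> 1"
  shows "(\<integral>\<^sup>+\<theta>. ennreal (\<Prod>j\<in>UNIV. normal_density (\<theta> * v j) \<sigma> (y j)) \<partial>lborel)
         * symmetric_window_risk J (\<sigma> / sqrt (\<Sum>j\<in>UNIV. (v j)\<^sup>2)) q ((\<Sum>j\<in>UNIV. v j * y j) / (\<Sum>j\<in>UNIV. (v j)\<^sup>2))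
       \<le> (\<integral>\<^sup>+\<theta>. ennreal (\<Prod>j\<in>UNIV. normal_density (\<theta> * v j) \<sigma> (y j)) * ennreal (\<bar>c - \<theta>\<bar> powr q) * indicator J \<theta> \<partial>lborel)"
proof -
  define t where "t = (\<Sum>j\<in>UNIV. v j * y j) / (\<Sum>j\<in>UNIV. (v j)\<^sup>2)"
  define \<tau> where "\<tau> = \<sigma> / sqrt (\<Sum>j\<in>UNIV. (v j)\<^sup>2)"
  obtain C where "C \<ge> 0"
    and "\<And>\<theta>. (\<Prod>j\<in>UNIV. normal_density (\<theta> * v j) \<sigma> (y j)) = C * normal_density t \<tau> \<theta>"
    using prod_normal_density_proportional[OF \<sigma> v, of y] unfolding t_def \<tau>_def by blast
  then have C: "ennreal (\<Prod>j\<in>UNIV. normal_density (\<theta> * v j) \<sigma> (y j))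
      = ennreal C * ennreal (normal_density t \<tau> \<theta>)" for \<theta>
    by (simp add: ennreal_mult)
  have "\<tau> > 0" using \<sigma> v by (simp add: \<tau>_def)
  then have "(\<integral>\<^sup>+\<theta>. ennreal (normal_density t \<tau> \<theta>) \<partial>lborel) = 1"
    using prob_space.emeasure_space_1[OF prob_space_normal_density] by (simp add: emeasure_density)
  then have "(\<integral>\<^sup>+\<theta>. ennreal (\<Prod>j\<in>UNIV. normal_density (\<theta> * v j) \<sigma> (y j)) \<partial>lborel) * symmetric_window_risk J \<tau> q t
      = ennreal C * symmetric_window_risk J \<tau> q t"
    unfolding C by (subst nn_integral_cmult) auto
  also have "\<dots> \<le> ennreal C * (\<integral>\<^sup>+\<theta>. ennreal (normal_density t \<tau> \<theta>) * ennreal (\<bar>c - \<theta>\<bar> powr q) * indicator J \<theta> \<partial>lborel)"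
    using q by (intro mult_left_mono symmetric_window_risk_le) auto
  also have "\<dots> = (\<integral>\<^sup>+\<theta>. ennreal (\<Prod>j\<in>UNIV. normal_density (\<theta> * v j) \<sigma> (y j)) * ennreal (\<bar>c - \<theta>\<bar> powr q) * indicator J \<theta> \<partial>lborel)"
    unfolding C by (subst nn_integral_cmult[symmetric]) (auto simp: mult.assoc)
  finally show ?thesis unfolding t_def \<tau>_def .
qed

text \<open>The least-squares error is \<open>\<sigma> \<langle>v, \<xi>\<rangle> / \<parallel>v\<parallel>\<^sup>2\<close>, whose law does not depend on \<open>\<theta>\<close>.\<close>
lemma nn_integral_likelihood_least_squares:
  fixes v :: "'n::finite \<Rightarrow> real" and h :: "real \<Rightarrow> ennreal"
  assumes \<sigma>: "\<sigma> > 0" and v: "(\<Sum>j\<in>UNIV. (v j)\<^sup>2) > 0" and [measurable]: "h \<in> borel_measurable borel"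
  shows "(\<integral>\<^sup>+\<theta>. (\<integral>\<^sup>+y. ennreal (\<Prod>j\<in>UNIV. normal_density (\<theta> * v j) \<sigma> (y j))
              * h ((\<Sum>j\<in>UNIV. v j * y j) / (\<Sum>j\<in>UNIV. (v j)\<^sup>2)) \<partial>PiM UNIV (\<lambda>_. lborel)) \<partial>lborel)
       = (\<integral>\<^sup>+t. h t \<partial>lborel)"
proof -
  define S where "S = (\<Sum>j\<in>UNIV. (v j)\<^sup>2)"
  have "(\<Sum>j\<in>UNIV. v j * (\<theta> * v j + \<sigma> * \<xi> j)) / S = \<theta> + \<sigma> * (\<Sum>j\<in>UNIV. v j * \<xi> j) / S" for \<theta> \<xi>
    using v by (simp add: S_def field_simps sum.distrib sum_distrib_left power2_eq_square)
  then have "(\<integral>\<^sup>+y. ennreal (\<Prod>j\<in>UNIV. normal_density (\<theta> * v j) \<sigma> (y j)) * h ((\<Sum>j\<in>UNIV. v j * y j) / S) \<partial>PiM UNIV (\<lambda>_. lborel))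
      = (\<integral>\<^sup>+\<xi>. h (\<theta> + \<sigma> * (\<Sum>j\<in>UNIV. v j * \<xi> j) / S) \<partial>std_gauss)" for \<theta>
    using nn_integral_std_gauss_affine[OF \<sigma>, of "\<lambda>y. h ((\<Sum>j\<in>UNIV. v j * y j) / S)" "\<lambda>j. \<theta> * v j"]
    by simp
  then have "(\<integral>\<^sup>+\<theta>. (\<integral>\<^sup>+y. ennreal (\<Prod>j\<in>UNIV. normal_density (\<theta> * v j) \<sigma> (y j))
              * h ((\<Sum>j\<in>UNIV. v j * y j) / S) \<partial>PiM UNIV (\<lambda>_. lborel)) \<partial>lborel)
      = (\<integral>\<^sup>+\<theta>. (\<integral>\<^sup>+\<xi>. h (\<theta> + \<sigma> * (\<Sum>j\<in>UNIV. v j * \<xi> j) / S) \<partial>std_gauss) \<partial>lborel)"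
    by simp
  also have "\<dots> = (\<integral>\<^sup>+t. h t \<partial>lborel)"
    by (rule nn_integral_lborel_random_shift[OF prob_space_std_gauss]) measurable
  finally show ?thesis unfolding S_def .
qed

text \<open>Integrated over a window of length \<open>L\<close>, the risk of any estimator of \<open>\<theta>\<close> from
  \<open>\<theta> v + \<sigma> \<xi>\<close> is at least that of the least-squares estimator, up to a boundary loss of \<open>2\<bar>u\<bar>\<close>.\<close>
lemma gaussian_location_window_risk_ge:
  fixes f :: "('n::finite \<Rightarrow> real) \<Rightarrow> real" and v :: "'n \<Rightarrow> real"
  assumes [measurable]: "f \<in> borel_measurable (PiM UNIV (\<lambda>_. borel))"
    and \<sigma>: "\<sigma> > 0" and q: "q \<ge> 1" and v: "(\<Sum>j\<in>UNIV. (v j)\<^sup>2) > 0"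
  shows "(\<integral>\<^sup>+u. ennreal (normal_density 0 (\<sigma> / sqrt (\<Sum>j\<in>UNIV. (v j)\<^sup>2)) u * \<bar>u\<bar> powr q * max 0 (L - 2 * \<bar>u\<bar>)) \<partial>lborel)
      \<le> (\<integral>\<^sup>+\<theta>. (\<integral>\<^sup>+\<xi>. ennreal (\<bar>f (\<lambda>j. \<theta> * v j + \<sigma> * \<xi> j) - \<theta>\<bar> powr q) \<partial>std_gauss) * indicator {c..c+L} \<theta> \<partial>lborel)"
proof -
  define P where "P = PiM UNIV (\<lambda>_::'n. lborel :: real measure)"
  define J where "J = {c..c+L}"
  define h where "h = symmetric_window_risk J (\<sigma> / sqrt (\<Sum>j\<in>UNIV. (v j)\<^sup>2)) q"
  define th where "th y = (\<Sum>j\<in>UNIV. v j * y j) / (\<Sum>j\<in>UNIV. (v j)\<^sup>2)" for y :: "'n \<Rightarrow> real"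
  define p where "p \<theta> y = ennreal (\<Prod>j\<in>UNIV. normal_density (\<theta> * v j) \<sigma> (y j))" for \<theta> y
  have [measurable]: "J \<in> sets borel" by (simp add: J_def)
  have [measurable]: "th \<in> borel_measurable (PiM UNIV (\<lambda>_. borel))" unfolding th_def by measurable
  interpret LP: pair_sigma_finite lborel P
    unfolding P_def
    by (intro pair_sigma_finite.intro lborel.sigma_finite_measure_axioms product_sigma_finite.sigma_finite
        product_sigma_finite.intro) auto
  have sets_P: "sets (lborel \<Otimes>\<^sub>M P) = sets (borel \<Otimes>\<^sub>M PiM UNIV (\<lambda>_::'n. borel :: real measure))"
    unfolding P_def by (intro sets_pair_measure_cong sets_PiM_UNIV_lborel) simp
  have [measurable]: "h \<in> borel_measurable borel" unfolding h_def by measurable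
  have [measurable]: "(\<lambda>\<theta>. p \<theta> y) \<in> borel_measurable borel" for y
    unfolding p_def normal_density_def by measurable
  have "(\<integral>\<^sup>+u. ennreal (normal_density 0 (\<sigma> / sqrt (\<Sum>j\<in>UNIV. (v j)\<^sup>2)) u * \<bar>u\<bar> powr q * max 0 (L - 2 * \<bar>u\<bar>)) \<partial>lborel)
      = (\<integral>\<^sup>+t. h t \<partial>lborel)"
    unfolding h_def J_def by (rule nn_integral_symmetric_window_risk[symmetric])
  also have "\<dots> = (\<integral>\<^sup>+\<theta>. (\<integral>\<^sup>+y. p \<theta> y * h (th y) \<partial>P) \<partial>lborel)"
    unfolding P_def p_def th_def by (rule nn_integral_likelihood_least_squares[symmetric, OF \<sigma> v]) measurable
  also have "\<dots> = (\<integral>\<^sup>+y. (\<integral>\<^sup>+\<theta>. p \<theta> y * h (th y) \<partial>lborel) \<partial>P)"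
    by (rule LP.Fubini'[symmetric]) (unfold measurable_cong_sets[OF sets_P refl] p_def normal_density_def, measurable)
  also have "\<dots> = (\<integral>\<^sup>+y. (\<integral>\<^sup>+\<theta>. p \<theta> y \<partial>lborel) * h (th y) \<partial>P)"
    by (intro nn_integral_cong nn_integral_multc) measurable
  also have "\<dots> \<le> (\<integral>\<^sup>+y. (\<integral>\<^sup>+\<theta>. p \<theta> y * ennreal (\<bar>f y - \<theta>\<bar> powr q) * indicator J \<theta> \<partial>lborel) \<partial>P)"
    unfolding p_def th_def h_def using \<sigma> v q by (intro nn_integral_mono likelihood_window_risk_ge) auto
  also have "\<dots> = (\<integral>\<^sup>+\<theta>. (\<integral>\<^sup>+y. p \<theta> y * ennreal (\<bar>f y - \<theta>\<bar> powr q) * indicator J \<theta> \<partial>P) \<partial>lborel)"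
    by (rule LP.Fubini') (unfold measurable_cong_sets[OF sets_P refl] p_def normal_density_def, measurable)
  also have "\<dots> = (\<integral>\<^sup>+\<theta>. (\<integral>\<^sup>+\<xi>. ennreal (\<bar>f (\<lambda>j. \<theta> * v j + \<sigma> * \<xi> j) - \<theta>\<bar> powr q) \<partial>std_gauss) * indicator J \<theta> \<partial>lborel)"
    unfolding P_def p_def
    by (intro nn_integral_cong) (subst nn_integral_std_gauss_affine[OF \<sigma>], measurable, simp add: nn_integral_multc)
  finally show ?thesis unfolding J_def .
qed

lemma nn_integral_window_abs_powr_ge:
  fixes c c' L q :: real
  assumes L: "L \<ge> 4" and q: "q \<ge> 1"
  shows "ennreal (L\<^sup>2 / 16) \<le> (\<integral>\<^sup>+\<theta>. ennreal (\<bar>c - \<theta>\<bar> powr q) * indicator {c'..c'+L} \<theta> \<partial>lborel)"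
proof -
  define t where "t = c' + L / 2"
  define J where "J = {c'..c'+L}"
  have "ennreal (L\<^sup>2 / 16) = (\<integral>\<^sup>+u. ennreal (L / 4) * indicator {L/4..L/2} u \<partial>lborel)"
    using L by (simp add: nn_integral_cmult_indicator ennreal_mult[symmetric] power2_eq_square)
  also have "\<dots> \<le> (\<integral>\<^sup>+u. ennreal (indicator J (t + u) * indicator J (t - u) * 1 * \<bar>u\<bar> powr q) \<partial>lborel)"
  proof (intro nn_integral_mono)
    fix u :: real
    show "ennreal (L / 4) * indicator {L/4..L/2} u \<le> ennreal (indicator J (t + u) * indicator J (t - u) * 1 * \<bar>u\<bar> powr q)"
    proof (cases "u \<in> {L/4..L/2}")
      case True
      then have "u \<ge> 1" using L by auto
      with True have "L / 4 \<le> \<bar>u\<bar> powr q"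
        using powr_mono[of 1 q u] q by auto
      moreover have "indicator J (t + u) * indicator J (t - u) = (1::real)"
        using True L by (auto simp: J_def t_def indicator_def)
      ultimately show ?thesis using True by (auto intro: ennreal_leI)
    qed simp
  qed
  also have "\<dots> \<le> (\<integral>\<^sup>+\<theta>. ennreal (indicator J \<theta> * 1 * \<bar>c - \<theta>\<bar> powr q) \<partial>lborel)"
    using nn_integral_symmetric_window_le[of "\<lambda>_. 1" J q t c] q by (simp add: J_def)
  also have "\<dots> = (\<integral>\<^sup>+\<theta>. ennreal (\<bar>c - \<theta>\<bar> powr q) * indicator {c'..c'+L} \<theta> \<partial>lborel)"
    by (intro nn_integral_cong) (auto simp: J_def indicator_def)
  finally show ?thesis .
qed

lemma degenerate_location_window_risk_ge:
  fixes f :: "('n::finite \<Rightarrow> real) \<Rightarrow> real"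
  assumes [measurable]: "f \<in> borel_measurable (PiM UNIV (\<lambda>_. borel))"
    and q: "q \<ge> 1" and L: "L \<ge> 4"
  shows "ennreal (L\<^sup>2 / 16)
      \<le> (\<integral>\<^sup>+\<theta>. (\<integral>\<^sup>+\<xi>. ennreal (\<bar>f (\<lambda>j. \<sigma> * \<xi> j) - \<theta>\<bar> powr q) \<partial>std_gauss) * indicator {c..c+L} \<theta> \<partial>lborel)"
proof -
  interpret G: prob_space "std_gauss :: ('n \<Rightarrow> real) measure" by (rule prob_space_std_gauss)
  interpret pair_sigma_finite lborel "std_gauss :: ('n \<Rightarrow> real) measure"
    by (intro pair_sigma_finite.intro lborel.sigma_finite_measure_axioms G.sigma_finite_measure_axioms)
  have sets_eq: "sets (lborel \<Otimes>\<^sub>M (std_gauss :: ('n \<Rightarrow> real) measure)) = sets (borel \<Otimes>\<^sub>M PiM UNIV (\<lambda>_::'n. borel :: real measure))"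
    by (intro sets_pair_measure_cong sets_std_gauss) simp
  have "(\<integral>\<^sup>+\<xi>. ennreal (L\<^sup>2 / 16) \<partial>(std_gauss :: ('n \<Rightarrow> real) measure))
      \<le> (\<integral>\<^sup>+\<xi>. (\<integral>\<^sup>+\<theta>. ennreal (\<bar>f (\<lambda>j. \<sigma> * \<xi> j) - \<theta>\<bar> powr q) * indicator {c..c+L} \<theta> \<partial>lborel) \<partial>std_gauss)"
    by (intro nn_integral_mono nn_integral_window_abs_powr_ge L q)
  also have "\<dots> = (\<integral>\<^sup>+\<theta>. (\<integral>\<^sup>+\<xi>. ennreal (\<bar>f (\<lambda>j. \<sigma> * \<xi> j) - \<theta>\<bar> powr q) * indicator {c..c+L} \<theta> \<partial>std_gauss) \<partial>lborel)"
    by (rule Fubini') (unfold measurable_cong_sets[OF sets_eq refl], measurable)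
  finally show ?thesis by (simp add: G.emeasure_space_1 nn_integral_multc)
qed

section \<open>Letting the window grow\<close>

lemma ennreal_sigma_q_powr_le:
  assumes "q \<ge> 1"
  shows "ennreal (sigma_q \<sigma> q powr q) \<le> (\<integral>\<^sup>+x. ennreal (normal_density 0 \<sigma> x * \<bar>x\<bar> powr q) \<partial>lborel)"
proof -
  define E where "E = (\<integral>x. normal_density 0 \<sigma> x * \<bar>x\<bar> powr q \<partial>lborel)"
  have "E \<ge> 0" unfolding E_def by (rule Bochner_Integration.integral_nonneg) auto
  then have "sigma_q \<sigma> q powr q = E"
    unfolding sigma_q_def E_def[symmetric] using assms by (simp add: powr_powr)
  moreover have "ennreal E \<le> (\<integral>\<^sup>+x. ennreal (normal_density 0 \<sigma> x * \<bar>x\<bar> powr q) \<partial>lborel)"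
    unfolding E_def by (subst integral_eq_nn_integral) (auto simp: ennreal_enn2real_if)
  ultimately show ?thesis by simp
qed

lemma nn_integral_normal_abs_powr_rescale:
  fixes \<nu> \<sigma> q :: real
  assumes \<nu>: "\<nu> > 0" and \<sigma>: "\<sigma> > 0"
  shows "(\<integral>\<^sup>+x. ennreal (normal_density 0 \<sigma> x * \<bar>x\<bar> powr q) \<partial>lborel) * ennreal (1 / \<nu> powr q)
       = (\<integral>\<^sup>+u. ennreal (normal_density 0 (\<sigma> / \<nu>) u * \<bar>u\<bar> powr q) \<partial>lborel)"
proof -
  have rescale: "ennreal \<nu> * ennreal (normal_density 0 \<sigma> (0 + \<nu> * u) * \<bar>0 + \<nu> * u\<bar> powr q / \<nu> powr q)
      = ennreal (normal_density 0 (\<sigma> / \<nu>) u * \<bar>u\<bar> powr q)" for u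
  proof -
    have "\<nu> * (normal_density 0 \<sigma> (0 + \<nu> * u) * \<bar>0 + \<nu> * u\<bar> powr q / \<nu> powr q)
        = (\<nu> * normal_density 0 \<sigma> (\<nu> * u)) * (\<bar>\<nu> * u\<bar> powr q / \<nu> powr q)"
      by (simp only: add_0 times_divide_eq_right mult.assoc)
    also have "\<bar>\<nu> * u\<bar> powr q / \<nu> powr q = \<bar>u\<bar> powr q"
      using \<nu> by (simp add: abs_mult powr_mult)
    also have "\<nu> * normal_density 0 \<sigma> (\<nu> * u) = normal_density 0 (\<sigma> / \<nu>) u"
      using \<nu> \<sigma> by (simp add: normal_density_def real_sqrt_mult real_sqrt_divide power_divide
          power_mult_distrib field_simps)
    finally have real_eq: "\<nu> * (normal_density 0 \<sigma> (0 + \<nu> * u) * \<bar>0 + \<nu> * u\<bar> powr q / \<nu> powr q)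
        = normal_density 0 (\<sigma> / \<nu>) u * \<bar>u\<bar> powr q" .
    have "ennreal \<nu> * ennreal (normal_density 0 \<sigma> (0 + \<nu> * u) * \<bar>0 + \<nu> * u\<bar> powr q / \<nu> powr q)
        = ennreal (\<nu> * (normal_density 0 \<sigma> (0 + \<nu> * u) * \<bar>0 + \<nu> * u\<bar> powr q / \<nu> powr q))"
      using \<nu> by (intro ennreal_mult[symmetric]) auto
    then show ?thesis by (simp only: real_eq)
  qed
  have "(\<integral>\<^sup>+x. ennreal (normal_density 0 \<sigma> x * \<bar>x\<bar> powr q) \<partial>lborel) * ennreal (1 / \<nu> powr q)
      = (\<integral>\<^sup>+x. ennreal (normal_density 0 \<sigma> x * \<bar>x\<bar> powr q / \<nu> powr q) \<partial>lborel)"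
    by (subst nn_integral_multc[symmetric])
      (auto simp: normal_density_def ennreal_mult[symmetric] intro!: nn_integral_cong)
  also have "\<dots> = ennreal \<nu> * (\<integral>\<^sup>+u. ennreal (normal_density 0 \<sigma> (0 + \<nu> * u) * \<bar>0 + \<nu> * u\<bar> powr q / \<nu> powr q) \<partial>lborel)"
    using \<nu> by (subst nn_integral_real_affine[where c=\<nu> and t=0]) (auto simp: normal_density_def)
  also have "\<dots> = (\<integral>\<^sup>+u. ennreal (normal_density 0 (\<sigma> / \<nu>) u * \<bar>u\<bar> powr q) \<partial>lborel)"
    by (subst nn_integral_cmult[symmetric]) (auto simp only: rescale, measurable)
  finally show ?thesis .
qed

lemma sigma_q_powr_div_le:
  fixes \<nu> \<sigma> q :: real
  assumes \<nu>: "\<nu> > 0" and \<sigma>: "\<sigma> > 0" and q: "q \<ge> 1"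
  shows "ennreal (sigma_q \<sigma> q powr q) * inverse (ennreal (\<nu> powr q))
       \<le> (\<integral>\<^sup>+u. ennreal (normal_density 0 (\<sigma> / \<nu>) u * \<bar>u\<bar> powr q) \<partial>lborel)"
proof -
  have "inverse (ennreal (\<nu> powr q)) = ennreal (1 / \<nu> powr q)"
    using \<nu> by (simp add: inverse_ennreal inverse_eq_divide)
  then have "ennreal (sigma_q \<sigma> q powr q) * inverse (ennreal (\<nu> powr q))
      \<le> (\<integral>\<^sup>+x. ennreal (normal_density 0 \<sigma> x * \<bar>x\<bar> powr q) \<partial>lborel) * ennreal (1 / \<nu> powr q)"
    using ennreal_sigma_q_powr_le[OF q] by (simp add: mult_right_mono)
  then show ?thesis by (simp only: nn_integral_normal_abs_powr_rescale[OF \<nu> \<sigma>])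
qed

lemma nn_integral_tent_div:
  fixes K :: "real \<Rightarrow> real"
  assumes [measurable]: "K \<in> borel_measurable borel" and K_nonneg: "\<And>u. K u \<ge> 0" and L: "L > 0"
  shows "(\<integral>\<^sup>+u. ennreal (K u * max 0 (L - 2 * \<bar>u\<bar>)) \<partial>lborel) / ennreal L
       = (\<integral>\<^sup>+u. ennreal (K u * max 0 (1 - 2 * \<bar>u\<bar> / L)) \<partial>lborel)"
proof -
  have "ennreal (K u * max 0 (L - 2 * \<bar>u\<bar>)) / ennreal L = ennreal (K u * max 0 (1 - 2 * \<bar>u\<bar> / L))" for u
  proof -
    have "K u * max 0 (L - 2 * \<bar>u\<bar>) / L = K u * max 0 (1 - 2 * \<bar>u\<bar> / L)"
      using L by (auto simp: max_def field_simps)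
    then show ?thesis using L K_nonneg[of u] by (subst divide_ennreal) auto
  qed
  then show ?thesis by (subst nn_integral_divide[symmetric]) auto
qed

lemma nn_integral_tent_SUP:
  fixes K :: "real \<Rightarrow> real"
  assumes [measurable]: "K \<in> borel_measurable borel" and K_nonneg: "\<And>u. K u \<ge> 0"
  defines "F n u \<equiv> ennreal (K u * max 0 (1 - 2 * \<bar>u\<bar> / (4 + real n)))"
  shows "incseq (\<lambda>n. integral\<^sup>N lborel (F n))"
    and "(\<integral>\<^sup>+u. ennreal (K u) \<partial>lborel) \<le> (SUP n. integral\<^sup>N lborel (F n))"
proof -
  have [measurable]: "F n \<in> borel_measurable lborel" for n unfolding F_def by measurable
  have mono: "F n u \<le> F m u" if "n \<le> m" for n m u
  proof -
    have "2 * \<bar>u\<bar> / (4 + real m) \<le> 2 * \<bar>u\<bar> / (4 + real n)"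
      using that by (intro divide_left_mono) auto
    then show ?thesis unfolding F_def using K_nonneg[of u]
      by (intro ennreal_leI mult_left_mono) auto
  qed
  then have "incseq F" by (auto simp: incseq_def le_fun_def)
  show "incseq (\<lambda>n. integral\<^sup>N lborel (F n))"
    unfolding incseq_def by (auto intro!: nn_integral_mono mono)
  have "ennreal (K u) \<le> (SUP n. F n u)" for u
  proof -
    have "(\<lambda>n. 2 * \<bar>u\<bar> / (4 + real n)) \<longlonglongrightarrow> 0"
      by (intro tendsto_divide_0[OF tendsto_const] filterlim_at_top_imp_at_infinity
            filterlim_tendsto_add_at_top[OF tendsto_const filterlim_real_sequentially])
    then have "(\<lambda>n. K u * max 0 (1 - 2 * \<bar>u\<bar> / (4 + real n))) \<longlonglongrightarrow> K u * max 0 (1 - 0)"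
      by (intro tendsto_intros)
    then have "(\<lambda>n. F n u) \<longlonglongrightarrow> ennreal (K u)"
      unfolding F_def by (intro tendsto_ennrealI) simp
    then show ?thesis
      by (rule LIMSEQ_le_const2) (intro exI[of _ 0] allI impI SUP_upper; simp)
  qed
  then have "(\<integral>\<^sup>+u. ennreal (K u) \<partial>lborel) \<le> (\<integral>\<^sup>+u. (SUP n. F n u) \<partial>lborel)"
    by (intro nn_integral_mono)
  also have "\<dots> = (SUP n. integral\<^sup>N lborel (F n))"
    by (rule nn_integral_monotone_convergence_SUP) (use \<open>incseq F\<close> in auto)
  finally show "(\<integral>\<^sup>+u. ennreal (K u) \<partial>lborel) \<le> (SUP n. integral\<^sup>N lborel (F n))" .
qed

text \<open>The bounds of \<open>gaussian_location_window_risk_ge\<close> and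
  \<open>degenerate_location_window_risk_ge\<close> for a design column of norm \<open>\<nu>\<close>.\<close>
definition window_risk_bound :: "real \<Rightarrow> real \<Rightarrow> real \<Rightarrow> real \<Rightarrow> ennreal" where
  "window_risk_bound \<sigma> q \<nu> L =
    (if \<nu> > 0 then \<integral>\<^sup>+u. ennreal (normal_density 0 (\<sigma> / \<nu>) u * \<bar>u\<bar> powr q * max 0 (L - 2 * \<bar>u\<bar>)) \<partial>lborel
     else ennreal (L\<^sup>2 / 16))"

lemma window_risk_bound_div_length_eq:
  assumes "L > 0"
  shows "window_risk_bound \<sigma> q \<nu> L / ennreal L =
    (if \<nu> > 0 then \<integral>\<^sup>+u. ennreal (normal_density 0 (\<sigma> / \<nu>) u * \<bar>u\<bar> powr q * max 0 (1 - 2 * \<bar>u\<bar> / L)) \<partial>lborel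
     else ennreal (L / 16))"
proof (cases "\<nu> > 0")
  case True
  then show ?thesis
    using assms nn_integral_tent_div[of "\<lambda>u. normal_density 0 (\<sigma> / \<nu>) u * \<bar>u\<bar> powr q" L]
    by (simp add: window_risk_bound_def mult.assoc)
next
  case False
  have "window_risk_bound \<sigma> q \<nu> L / ennreal L = ennreal (L\<^sup>2 / 16 / L)"
    using assms unfolding window_risk_bound_def if_not_P[OF False] by (intro divide_ennreal) auto
  also have "L\<^sup>2 / 16 / L = L / 16"
    using assms by (simp add: power2_eq_square)
  finally show ?thesis using False by simp
qed

lemma window_risk_bound_div_length:
  fixes \<sigma> q \<nu> :: real
  assumes "\<sigma> > 0" "q \<ge> 1"
  defines "G n \<equiv> window_risk_bound \<sigma> q \<nu> (4 + real n) / ennreal (4 + real n)"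
  shows "incseq G" and "ennreal (sigma_q \<sigma> q powr q) * inverse (ennreal (\<nu> powr q)) \<le> (SUP n. G n)"
proof -
  have "incseq G \<and> ennreal (sigma_q \<sigma> q powr q) * inverse (ennreal (\<nu> powr q)) \<le> (SUP n. G n)"
  proof (cases "\<nu> > 0")
    case True
    define K where "K u = normal_density 0 (\<sigma> / \<nu>) u * \<bar>u\<bar> powr q" for u
    have [measurable]: "K \<in> borel_measurable borel" unfolding K_def by measurable
    have "G = (\<lambda>n. \<integral>\<^sup>+u. ennreal (K u * max 0 (1 - 2 * \<bar>u\<bar> / (4 + real n))) \<partial>lborel)"
      unfolding G_def K_def using True by (intro ext, subst window_risk_bound_div_length_eq) auto
    then show ?thesis
      using nn_integral_tent_SUP[of K] sigma_q_powr_div_le[OF True assms(1,2)]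
      by (auto simp: K_def intro: order_trans)
  next
    case False
    then have G: "G n = ennreal ((4 + real n) / 16)" for n
      unfolding G_def by (subst window_risk_bound_div_length_eq) auto
    then have "of_nat n \<le> (SUP n. G n)" for n
      by (intro order_trans[OF _ SUP_upper[of "16 * n"]]) (auto simp: ennreal_of_nat_eq_real_of_nat ennreal_leI)
    then have "(SUP n. G n) = top"
      using ennreal_SUP_of_nat_eq_top top.extremum_unique SUP_least by metis
    moreover have "incseq G" by (auto simp: incseq_def G intro!: ennreal_leI)
    ultimately show ?thesis by (simp only: top_greatest)
  qed
  then show "incseq G" and "ennreal (sigma_q \<sigma> q powr q) * inverse (ennreal (\<nu> powr q)) \<le> (SUP n. G n)"
    by auto
qed

section \<open>Bayes risk of a sparse prior\<close>

definition coord_risk ::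
    "(('n::finite \<Rightarrow> real) \<Rightarrow> ('p \<Rightarrow> real)) \<Rightarrow> ('n \<Rightarrow> 'p::finite \<Rightarrow> real) \<Rightarrow> real \<Rightarrow> real \<Rightarrow> 'p \<Rightarrow> ('p \<Rightarrow> real) \<Rightarrow> ennreal" where
  "coord_risk est X \<sigma> q i \<beta> = (\<integral>\<^sup>+\<xi>. ennreal (\<bar>est (obs X \<sigma> \<beta> \<xi>) i - \<beta> i\<bar> powr q) \<partial>std_gauss)"

lemma measurable_obs [measurable]:
  "(\<lambda>x. obs X \<sigma> (fst x) (snd x))
     \<in> (PiM UNIV (\<lambda>_::'p::finite. borel) \<Otimes>\<^sub>M PiM UNIV (\<lambda>_::'n::finite. borel)) \<rightarrow>\<^sub>M PiM UNIV (\<lambda>_::'n. borel :: real measure)"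
  unfolding obs_def by measurable

lemma measurable_coord_risk [measurable]:
  fixes est :: "('n::finite \<Rightarrow> real) \<Rightarrow> ('p::finite \<Rightarrow> real)"
  assumes [measurable]: "est \<in> PiM UNIV (\<lambda>_. borel) \<rightarrow>\<^sub>M PiM UNIV (\<lambda>_. borel)"
  shows "coord_risk est X \<sigma> q i \<in> borel_measurable (PiM UNIV (\<lambda>_. borel))"
proof -
  interpret G: prob_space "std_gauss :: ('n \<Rightarrow> real) measure" by (rule prob_space_std_gauss)
  have "sets (PiM UNIV (\<lambda>_::'p. borel) \<Otimes>\<^sub>M (std_gauss :: ('n \<Rightarrow> real) measure))
      = sets (PiM UNIV (\<lambda>_::'p. borel :: real measure) \<Otimes>\<^sub>M PiM UNIV (\<lambda>_::'n. borel :: real measure))"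
    by (intro sets_pair_measure_cong sets_std_gauss) simp
  then show ?thesis
    unfolding coord_risk_def
    by (intro G.borel_measurable_nn_integral) (unfold measurable_cong_sets[OF _ refl], measurable)
qed

lemma nn_integral_std_gauss_sum_eq_coord_risk:
  fixes est :: "('n::finite \<Rightarrow> real) \<Rightarrow> ('p::finite \<Rightarrow> real)"
  assumes [measurable]: "est \<in> PiM UNIV (\<lambda>_. borel) \<rightarrow>\<^sub>M PiM UNIV (\<lambda>_. borel)"
  shows "(\<integral>\<^sup>+\<xi>. ennreal (\<Sum>i\<in>UNIV. \<bar>est (obs X \<sigma> \<beta> \<xi>) i - \<beta> i\<bar> powr q) \<partial>std_gauss)
       = (\<Sum>i\<in>UNIV. coord_risk est X \<sigma> q i \<beta>)"
proof -
  have [measurable]: "obs X \<sigma> \<beta> \<in> PiM UNIV (\<lambda>_. borel) \<rightarrow>\<^sub>M PiM UNIV (\<lambda>_. borel)"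
    unfolding obs_def by measurable
  show ?thesis
    unfolding coord_risk_def by (subst nn_integral_sum[symmetric]) (auto intro!: nn_integral_cong)
qed

lemma obs_fun_upd:
  "obs X \<sigma> (x(i := \<theta>)) \<xi> = (\<lambda>j. (\<Sum>k\<in>UNIV. X j k * (x(i := 0)) k) + \<theta> * X j i + \<sigma> * \<xi> j)"
proof -
  have "(\<Sum>k\<in>UNIV. X j k * (x(i := \<theta>)) k)
      = (\<Sum>k\<in>UNIV. X j k * (x(i := 0)) k + (if k = i then X j i * \<theta> else 0))" for j
    by (intro sum.cong) auto
  then show ?thesis by (simp add: obs_def sum.distrib mult.commute fun_eq_iff)
qed

lemma window_risk_bound_le_coord_risk:
  fixes est :: "('n::finite \<Rightarrow> real) \<Rightarrow> ('p::finite \<Rightarrow> real)"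
  assumes [measurable]: "est \<in> PiM UNIV (\<lambda>_. borel) \<rightarrow>\<^sub>M PiM UNIV (\<lambda>_. borel)"
    and \<sigma>: "\<sigma> > 0" and q: "q \<ge> 1" and L: "L \<ge> 4"
  shows "window_risk_bound \<sigma> q (col_norm X i) L
     \<le> (\<integral>\<^sup>+\<theta>. coord_risk est X \<sigma> q i (x(i := \<theta>)) * indicator {c..c+L} \<theta> \<partial>lborel)"
proof -
  define m where "m j = (\<Sum>k\<in>UNIV. X j k * (x(i := 0)) k)" for j
  define v where "v j = X j i" for j
  define f where "f y = est (\<lambda>j. m j + y j) i" for y
  have [measurable]: "f \<in> borel_measurable (PiM UNIV (\<lambda>_. borel))" unfolding f_def by measurable
  have risk: "coord_risk est X \<sigma> q i (x(i := \<theta>))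
      = (\<integral>\<^sup>+\<xi>. ennreal (\<bar>f (\<lambda>j. \<theta> * v j + \<sigma> * \<xi> j) - \<theta>\<bar> powr q) \<partial>std_gauss)" for \<theta>
    by (simp add: coord_risk_def obs_fun_upd f_def m_def v_def add.assoc)
  have norm: "col_norm X i = sqrt (\<Sum>j\<in>UNIV. (v j)\<^sup>2)" by (simp add: col_norm_def v_def)
  show ?thesis
  proof (cases "col_norm X i > 0")
    case True
    then have "(\<Sum>j\<in>UNIV. (v j)\<^sup>2) > 0" unfolding norm by simp
    with True show ?thesis
      unfolding risk norm window_risk_bound_def
      by (simp add: gaussian_location_window_risk_ge \<sigma> q)
  next
    case False
    then have "(\<Sum>j\<in>UNIV. (v j)\<^sup>2) = 0"
      unfolding norm by (metis less_eq_real_def real_sqrt_gt_0_iff sum_nonneg zero_le_power2)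
    then have "v j = 0" for j
      using sum_nonneg_eq_0_iff[of UNIV "\<lambda>j. (v j)\<^sup>2"] by simp
    with False show ?thesis
      unfolding risk window_risk_bound_def
      by (simp add: degenerate_location_window_risk_ge q L)
  qed
qed

definition window_prior :: "'p::finite set \<Rightarrow> real \<Rightarrow> real \<Rightarrow> ('p \<Rightarrow> real) measure" where
  "window_prior S a L = PiM UNIV (\<lambda>j. if j \<in> S then uniform_measure lborel {a..a+L} else return borel 0)"

lemma prob_space_window_prior: "L > 0 \<Longrightarrow> prob_space (window_prior S a L)"
  unfolding window_prior_def
  by (auto intro!: prob_space_PiM prob_space_uniform_measure prob_space_return)

lemma sets_window_prior [measurable_cong]: "sets (window_prior S a L) = sets (PiM UNIV (\<lambda>_. borel))"
  unfolding window_prior_def by (intro sets_PiM_cong) auto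

lemma AE_window_prior_in_Omega:
  assumes "L > 0" "a > 0" "card S = s"
  shows "AE \<beta> in window_prior S a L. \<beta> \<in> Omega s a"
proof -
  define M where "M = (\<lambda>j. if j \<in> S then uniform_measure lborel {a..a+L} else return borel (0::real))"
  have "prob_space (M j)" for j
    using assms by (auto simp: M_def intro!: prob_space_uniform_measure prob_space_return)
  moreover have "AE y in M j. (j \<in> S \<longrightarrow> y \<in> {a..a+L}) \<and> (j \<notin> S \<longrightarrow> y = 0)" for j
  proof (cases "j \<in> S")
    case True
    have "AE y in uniform_measure lborel {a..a+L}. y \<in> {a..a+L}"
      by (rule AE_uniform_measureI) auto
    with True show ?thesis unfolding M_def by simp
  next
    case False
    then show ?thesis unfolding M_def by (simp add: AE_return)
  qed
  ultimately have "AE \<beta> in PiM UNIV M. \<forall>j\<in>UNIV. (j \<in> S \<longrightarrow> \<beta> j \<in> {a..a+L}) \<and> (j \<notin> S \<longrightarrow> \<beta> j = 0)"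
    by (intro AE_finite_allI AE_PiM_component) auto
  moreover have "\<beta> \<in> Omega s a"
    if "\<forall>j\<in>UNIV. (j \<in> S \<longrightarrow> \<beta> j \<in> {a..a+L}) \<and> (j \<notin> S \<longrightarrow> \<beta> j = 0)" for \<beta>
  proof -
    have "{i. \<beta> i \<noteq> 0} \<subseteq> S" using that by auto
    then have "card {i. \<beta> i \<noteq> 0} \<le> card S" by (intro card_mono) auto
    moreover have "\<forall>i. \<beta> i \<noteq> 0 \<longrightarrow> \<bar>\<beta> i\<bar> \<ge> a" using that assms by force
    ultimately show ?thesis by (simp add: Omega_def assms)
  qed
  ultimately show ?thesis
    unfolding window_prior_def M_def[symmetric] by (auto elim!: AE_mp)
qed

lemma nn_integral_le_SUP_of_AE:
  assumes "prob_space M" "AE x in M. x \<in> A"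
  shows "(\<integral>\<^sup>+x. f x \<partial>M) \<le> (SUP x\<in>A. f x)"
proof -
  have "(\<integral>\<^sup>+x. f x \<partial>M) \<le> (\<integral>\<^sup>+x. (SUP y\<in>A. f y) \<partial>M)"
    using assms(2) by (intro nn_integral_mono_AE) (auto elim!: AE_mp intro: SUP_upper)
  then show ?thesis by (simp add: prob_space.emeasure_space_1[OF assms(1)])
qed

lemma nn_integral_window_prior_ge:
  assumes [measurable]: "g \<in> borel_measurable (PiM UNIV (\<lambda>_. borel))"
    and L: "L > 0" and "i \<in> S"
    and lower: "\<And>x. c \<le> (\<integral>\<^sup>+\<theta>. g (x(i := \<theta>)) * indicator {a..a+L} \<theta> \<partial>lborel)"
  shows "c / ennreal L \<le> (\<integral>\<^sup>+\<beta>. g \<beta> \<partial>window_prior S a L)"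
proof -
  define M where "M = (\<lambda>j. if j \<in> S then uniform_measure lborel {a..a+L} else return borel (0::real))"
  have "prob_space (M j)" for j
    using L by (auto simp: M_def intro!: prob_space_uniform_measure prob_space_return)
  then interpret product_prob_space M by (intro product_prob_spaceI)
  have sets_M: "sets (PiM UNIV M) = sets (PiM UNIV (\<lambda>_. borel))"
    by (intro sets_PiM_cong) (auto simp: M_def)
  have UNIV_eq: "insert i (UNIV - {i}) = UNIV" by auto
  have "(\<integral>\<^sup>+\<beta>. g \<beta> \<partial>PiM (insert i (UNIV - {i})) M) = (\<integral>\<^sup>+x. (\<integral>\<^sup>+\<theta>. g (x(i := \<theta>)) \<partial>M i) \<partial>PiM (UNIV - {i}) M)"
    by (rule product_nn_integral_insert) (auto simp: UNIV_eq measurable_cong_sets[OF sets_M refl])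
  then have split: "(\<integral>\<^sup>+\<beta>. g \<beta> \<partial>window_prior S a L) = (\<integral>\<^sup>+x. (\<integral>\<^sup>+\<theta>. g (x(i := \<theta>)) \<partial>M i) \<partial>PiM (UNIV - {i}) M)"
    by (simp add: insert_absorb window_prior_def M_def[symmetric])
  have "c / ennreal L \<le> (\<integral>\<^sup>+\<theta>. g (x(i := \<theta>)) \<partial>M i)" for x
  proof -
    have [measurable]: "(\<lambda>\<theta>. x(i := \<theta>)) \<in> borel \<rightarrow>\<^sub>M PiM UNIV (\<lambda>_. borel :: real measure)"
      by (simp add: fun_upd_def)
    have "(\<integral>\<^sup>+\<theta>. g (x(i := \<theta>)) \<partial>M i) = (\<integral>\<^sup>+\<theta>. g (x(i := \<theta>)) * indicator {a..a+L} \<theta> \<partial>lborel) / ennreal L"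
      using L \<open>i \<in> S\<close> by (simp add: M_def nn_integral_uniform_measure)
    then show ?thesis using lower[of x] by (simp add: divide_right_mono_ennreal)
  qed
  then have "(\<integral>\<^sup>+x. c / ennreal L \<partial>PiM (UNIV - {i}) M) \<le> (\<integral>\<^sup>+x. (\<integral>\<^sup>+\<theta>. g (x(i := \<theta>)) \<partial>M i) \<partial>PiM (UNIV - {i}) M)"
    by (intro nn_integral_mono)
  then show ?thesis
    unfolding split by (simp add: prob_space.emeasure_space_1[OF prob_space_PiM] \<open>\<And>j. prob_space (M j)\<close>)
qed

lemma bayes_window_risk_le_SUP:
  fixes est :: "('n::finite \<Rightarrow> real) \<Rightarrow> ('p::finite \<Rightarrow> real)"
  assumes [measurable]: "est \<in> PiM UNIV (\<lambda>_. borel) \<rightarrow>\<^sub>M PiM UNIV (\<lambda>_. borel)"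
    and L: "L > 0" and a: "a > 0" and S: "card S = s"
    and lower: "\<And>i x. i \<in> S \<Longrightarrow> lw i \<le> (\<integral>\<^sup>+\<theta>. coord_risk est X \<sigma> q i (x(i := \<theta>)) * indicator {a..a+L} \<theta> \<partial>lborel)"
  shows "(\<Sum>i\<in>S. lw i / ennreal L)
       \<le> (SUP \<beta>\<in>Omega s a. \<integral>\<^sup>+\<xi>. ennreal (\<Sum>i\<in>UNIV. \<bar>est (obs X \<sigma> \<beta> \<xi>) i - \<beta> i\<bar> powr q) \<partial>std_gauss)"
proof -
  have "(\<Sum>i\<in>S. lw i / ennreal L) \<le> (\<Sum>i\<in>S. \<integral>\<^sup>+\<beta>. coord_risk est X \<sigma> q i \<beta> \<partial>window_prior S a L)"
    using L lower by (intro sum_mono nn_integral_window_prior_ge) auto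
  also have "\<dots> = (\<integral>\<^sup>+\<beta>. (\<Sum>i\<in>S. coord_risk est X \<sigma> q i \<beta>) \<partial>window_prior S a L)"
    by (rule nn_integral_sum[symmetric]) measurable
  also have "\<dots> \<le> (\<integral>\<^sup>+\<beta>. (\<Sum>i\<in>UNIV. coord_risk est X \<sigma> q i \<beta>) \<partial>window_prior S a L)"
    by (intro nn_integral_mono sum_mono2) auto
  also have "\<dots> \<le> (SUP \<beta>\<in>Omega s a. \<Sum>i\<in>UNIV. coord_risk est X \<sigma> q i \<beta>)"
    using L a S by (intro nn_integral_le_SUP_of_AE prob_space_window_prior AE_window_prior_in_Omega)
  finally show ?thesis
    by (simp add: nn_integral_std_gauss_sum_eq_coord_risk)
qed

theorem theorem3:
  fixes X :: "'n::finite \<Rightarrow> 'p::finite \<Rightarrow> real"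
    and \<sigma> a q :: real and s :: nat
  assumes "\<sigma> > 0" and "a > 0" and "q \<ge> 1" and "s < CARD('p)"
  shows "(INF est \<in> (PiM (UNIV::'n set) (\<lambda>_. borel)) \<rightarrow>\<^sub>M (PiM (UNIV::'p set) (\<lambda>_. borel)).
            SUP \<beta> \<in> Omega s a.
              \<integral>\<^sup>+ \<xi>. ennreal (\<Sum>i\<in>UNIV. \<bar>est (obs X \<sigma> \<beta> \<xi>) i - \<beta> i\<bar> powr q) \<partial>std_gauss)
         \<ge> (SUP S \<in> {S :: 'p set. card S = s}.
              \<Sum>i\<in>S. ennreal (sigma_q \<sigma> q powr q) * inverse (ennreal (col_norm X i powr q)))"
proof (intro INF_greatest SUP_least)
  fix est :: "('n \<Rightarrow> real) \<Rightarrow> ('p \<Rightarrow> real)" and S :: "'p set"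
  assume est: "est \<in> PiM UNIV (\<lambda>_. borel) \<rightarrow>\<^sub>M PiM UNIV (\<lambda>_. borel)" and "S \<in> {S. card S = s}"
  define G where "G i n = window_risk_bound \<sigma> q (col_norm X i) (4 + real n) / ennreal (4 + real n)" for i n
  have limit: "incseq (G i)" "ennreal (sigma_q \<sigma> q powr q) * inverse (ennreal (col_norm X i powr q)) \<le> (SUP n. G i n)"
    for i
    unfolding G_def using window_risk_bound_div_length[OF \<open>\<sigma> > 0\<close> \<open>q \<ge> 1\<close>] by blast+
  have "(\<Sum>i\<in>S. ennreal (sigma_q \<sigma> q powr q) * inverse (ennreal (col_norm X i powr q)))
      \<le> (\<Sum>i\<in>S. SUP n. G i n)"
    by (intro sum_mono limit)
  also have "\<dots> = (SUP n. \<Sum>i\<in>S. G i n)"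
    by (rule ennreal_SUP_sum[symmetric]) (rule limit)
  also have "\<dots> \<le> (SUP \<beta> \<in> Omega s a. \<integral>\<^sup>+ \<xi>. ennreal (\<Sum>i\<in>UNIV. \<bar>est (obs X \<sigma> \<beta> \<xi>) i - \<beta> i\<bar> powr q) \<partial>std_gauss)"
    unfolding G_def using \<open>S \<in> {S. card S = s}\<close> assms
    by (intro SUP_least bayes_window_risk_le_SUP[OF est] window_risk_bound_le_coord_risk[OF est]) auto
  finally show "(\<Sum>i\<in>S. ennreal (sigma_q \<sigma> q powr q) * inverse (ennreal (col_norm X i powr q)))
      \<le> (SUP \<beta> \<in> Omega s a. \<integral>\<^sup>+ \<xi>. ennreal (\<Sum>i\<in>UNIV. \<bar>est (obs X \<sigma> \<beta> \<xi>) i - \<beta> i\<bar> powr q) \<partial>std_gauss)" .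
qed

end
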